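(* Let $X$ be a compact metric space containing a free topological $n$-ball with $n\ge 2$. Then there exists a homeomorphism $f$ of $X$ onto itself and a point $x\in X$ such that $\omega_f(x)$ is infinite and consists of fixed points of $f$. In particular, $X$ does not have the $\omega$-FTP property.
   Context: $B_n=\{x\in\mathbb{R}^n:\|x\|\le1\}$ with Euclidean norm, $\mathrm{int}(B_n)=\{\|x\|<1\}$. A topological $n$-ball is a space homeomorphic to $B_n$; a topological $n$-ball $B\subset X$ is free in $X$ if $h(\mathrm{int}(B_n))$ is open in $X$ for a homeomorphism $h:B_n\to B$. For continuous $f:X\to X$, $\omega_f(x)=\{y:\ \exists\, n_i\to+\infty,\ f^{n_i}(x)\to y\}$, totally periodic if all its points are periodic. $X$ has the $\omega$-FTP property if for every continuous $f:X\to X$, every totally periodic $\omega$-limit set is finite. *)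

theory Defs
  imports "HOL-Analysis.Analysis"
begin

definition omega_limit :: "('a::topological_space \<Rightarrow> 'a) \<Rightarrow> 'a \<Rightarrow> 'a set" where
  "omega_limit f x = {y. \<exists>r::nat \<Rightarrow> nat. filterlim r at_top sequentially \<and>
                          ((\<lambda>i. (f ^^ r i) x) \<longlonglongrightarrow> y)}"

definition periodic_point :: "('a \<Rightarrow> 'a) \<Rightarrow> 'a \<Rightarrow> bool" where
  "periodic_point f y \<longleftrightarrow> (\<exists>n>0. (f ^^ n) y = y)"

definition totally_periodic :: "('a \<Rightarrow> 'a) \<Rightarrow> 'a set \<Rightarrow> bool" where
  "totally_periodic f S \<longleftrightarrow> (\<forall>y\<in>S. periodic_point f y)"

definition omega_FTP :: "'a::topological_space set \<Rightarrow> bool" where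
  "omega_FTP X \<longleftrightarrow> (\<forall>f. continuous_on X f \<and> f ` X \<subseteq> X \<longrightarrow>
       (\<forall>x\<in>X. totally_periodic f (omega_limit f x) \<longrightarrow> finite (omega_limit f x)))"

definition free_ball :: "'a::topological_space set \<Rightarrow> 'a set \<Rightarrow> (real^'n \<Rightarrow> 'a) \<Rightarrow> bool" where
  "free_ball X B h \<longleftrightarrow> B \<subseteq> X \<and> (\<exists>k. homeomorphism (cball 0 1) B h k) \<and>
       openin (top_of_set X) (h ` ball 0 1)"

end

theory Submission
  imports Defs
begin

text \<open>
  Inside the free ball, in a coordinate plane spanned by the axes i and j, take the map that pushes
  a point of radius r out to radius h(r) = r (1 + (1 - r)^2) and then rotates it by the angle
  1 - h(r). It is a homeomorphism of the closed ball fixing the boundary sphere, so it extends by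
  the identity to a homeomorphism of X. Along the orbit of the point of radius 1/2, the gaps
  1 - r_n are of order 1/n: they tend to 0, so the orbit accumulates only on the sphere, where
  the map is the identity, while their sum, the total angle turned, diverges. An increasing
  sequence with vanishing steps and no upper bound comes arbitrarily close to every residue modulo
  2\<pi>, so the whole unit circle of that plane lies in the \<omega>-limit set.
\<close>

lemma sum_UNIV_remove2:
  fixes f :: "'n::finite \<Rightarrow> 'b::comm_monoid_add"
  assumes "i \<noteq> j"
  shows "sum f UNIV = f i + f j + sum f (UNIV - {i, j})"
proof -
  have "sum f UNIV = f i + sum f (UNIV - {i})" by (simp add: sum.remove)
  also have "sum f (UNIV - {i}) = f j + sum f (UNIV - {i} - {j})"
    using assms by (intro sum.remove) auto
  also have "UNIV - {i} - {j} = UNIV - {i, j}" by auto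
  finally show ?thesis by (simp add: add.assoc)
qed

definition plane_rotation :: "'n::finite \<Rightarrow> 'n \<Rightarrow> real \<Rightarrow> real^'n \<Rightarrow> real^'n" where
  "plane_rotation i j t v = (\<chi> k. if k = i then cos t * v$i - sin t * v$j
                                 else if k = j then sin t * v$i + cos t * v$j else v$k)"

definition polar_point :: "'n::finite \<Rightarrow> 'n \<Rightarrow> real \<Rightarrow> real \<Rightarrow> real^'n" where
  "polar_point i j r s = (\<chi> k. if k = i then r * cos s else if k = j then r * sin s else 0)"

lemma norm_polar_point:
  assumes "i \<noteq> j"
  shows "norm (polar_point i j r s) = \<bar>r\<bar>"
proof -
  have "inner (polar_point i j r s) (polar_point i j r s) = (r * cos s)\<^sup>2 + (r * sin s)\<^sup>2"
    using assms
    by (simp add: inner_vec_def sum_UNIV_remove2[OF assms] polar_point_def power2_eq_square not_sym)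
  also have "\<dots> = r\<^sup>2" by (simp add: power_mult_distrib flip: distrib_left)
  finally show ?thesis by (simp add: norm_eq_sqrt_inner)
qed

lemma norm_plane_rotation:
  assumes "i \<noteq> j"
  shows "norm (plane_rotation i j t v) = norm v"
proof -
  let ?w = "plane_rotation i j t v"
  have "?w$i * ?w$i + ?w$j * ?w$j = (cos t * v$i - sin t * v$j)\<^sup>2 + (sin t * v$i + cos t * v$j)\<^sup>2"
    using assms by (simp add: plane_rotation_def power2_eq_square)
  also have "\<dots> = ((sin t)\<^sup>2 + (cos t)\<^sup>2) * ((v$i)\<^sup>2 + (v$j)\<^sup>2)" by algebra
  also have "\<dots> = v$i * v$i + v$j * v$j" by (simp only: sin_cos_squared_add) (simp add: power2_eq_square)
  finally have ij: "?w$i * ?w$i + ?w$j * ?w$j = v$i * v$i + v$j * v$j" .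
  have "(\<Sum>k\<in>UNIV - {i, j}. ?w$k * ?w$k) = (\<Sum>k\<in>UNIV - {i, j}. v$k * v$k)"
    by (intro sum.cong) (auto simp: plane_rotation_def)
  with ij have "inner ?w ?w = inner v v"
    unfolding inner_vec_def sum_UNIV_remove2[OF assms] by simp
  then show ?thesis by (simp add: norm_eq_sqrt_inner)
qed

lemma plane_rotation_add:
  "i \<noteq> j \<Longrightarrow> plane_rotation i j a (plane_rotation i j b v) = plane_rotation i j (a + b) v"
  by (auto simp: plane_rotation_def vec_eq_iff cos_add sin_add algebra_simps)

lemma plane_rotation_0 [simp]: "plane_rotation i j 0 v = v"
  by (auto simp: plane_rotation_def vec_eq_iff)

lemma plane_rotation_polar_point:
  "i \<noteq> j \<Longrightarrow> plane_rotation i j a (polar_point i j r s) = polar_point i j r (s + a)"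
  by (auto simp: plane_rotation_def polar_point_def vec_eq_iff cos_add sin_add algebra_simps)

lemma continuous_on_plane_rotation [continuous_intros]:
  fixes S :: "'b::t2_space set"
  assumes "continuous_on S t" "continuous_on S v"
  shows "continuous_on S (\<lambda>x. plane_rotation i j (t x) (v x))"
  unfolding plane_rotation_def
proof (intro continuous_on_vec_lambda)
  fix k show "continuous_on S (\<lambda>x. if k = i then cos (t x) * v x $ i - sin (t x) * v x $ j
      else if k = j then sin (t x) * v x $ i + cos (t x) * v x $ j else v x $ k)"
    by (cases "k = i"; cases "k = j") (auto intro!: continuous_intros assms)
qed

lemma tendsto_polar_point [tendsto_intros]:
  fixes F :: "'b::t2_space filter"
  assumes "(r \<longlongrightarrow> a) F" "(s \<longlongrightarrow> b) F"
  shows "((\<lambda>x. polar_point i j (r x) (s x)) \<longlongrightarrow> polar_point i j a b) F"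
  unfolding polar_point_def
proof (intro tendsto_vec_lambda)
  fix k show "((\<lambda>x. if k = i then r x * cos (s x) else if k = j then r x * sin (s x) else 0)
      \<longlongrightarrow> (if k = i then a * cos b else if k = j then a * sin b else 0)) F"
    by (cases "k = i"; cases "k = j") (auto intro!: tendsto_intros assms)
qed

lemma polar_point_periodic: "polar_point i j r (s - 2 * pi * of_int N) = polar_point i j r s"
proof -
  have "cos (s - 2 * pi * of_int N) = cos s" "sin (s - 2 * pi * of_int N) = sin s"
    by (simp_all only: cos_diff sin_diff cos_int_2pin sin_int_2pin)
  then show ?thesis by (simp only: polar_point_def)
qed

lemma infinite_polar_circle:
  assumes "i \<noteq> j"
  shows "infinite (range (polar_point i j 1))"
proof
  assume "finite (range (polar_point i j 1))"
  then have "finite ((\<lambda>v. v $ i) ` range (polar_point i j 1))" by (rule finite_imageI)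
  moreover have "{-1..1} \<subseteq> (\<lambda>v. v $ i) ` range (polar_point i j 1)"
  proof
    fix y :: real assume "y \<in> {-1..1}"
    then have "y = polar_point i j 1 (arccos y) $ i" by (simp add: polar_point_def cos_arccos)
    then show "y \<in> (\<lambda>v. v $ i) ` range (polar_point i j 1)" by (rule image_eqI[OF _ rangeI])
  qed
  ultimately have "finite {-1..1::real}" by (rule finite_subset[rotated])
  then show False using infinite_Icc[of "-1::real" 1] by simp
qed

definition radial_factor :: "real \<Rightarrow> real" where
  "radial_factor r = 1 + (1 - r)^2"

definition radial_profile :: "real \<Rightarrow> real" where
  "radial_profile r = r * radial_factor r"

definition radial_push :: "'a::real_normed_vector \<Rightarrow> 'a" where
  "radial_push v = radial_factor (norm v) *\<^sub>R v"

definition spiral_map :: "'n::finite \<Rightarrow> 'n \<Rightarrow> real^'n \<Rightarrow> real^'n" where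
  "spiral_map i j v = plane_rotation i j (1 - norm (radial_push v)) (radial_push v)"

lemma radial_factor_pos: "radial_factor r > 0"
  unfolding radial_factor_def by (simp add: add_pos_nonneg)

lemma radial_profile_0 [simp]: "radial_profile 0 = 0"
  and radial_profile_1 [simp]: "radial_profile 1 = 1"
  and radial_factor_1 [simp]: "radial_factor 1 = 1"
  by (simp_all add: radial_profile_def radial_factor_def)

lemma continuous_on_radial_profile: "continuous_on S radial_profile"
  unfolding radial_profile_def radial_factor_def by (intro continuous_intros)

lemma norm_radial_push: "norm (radial_push v) = radial_profile (norm v)"
  using radial_factor_pos[of "norm v"] by (simp add: radial_push_def radial_profile_def)

lemma radial_profile_bounds:
  assumes "0 \<le> r" "r \<le> 1"
  shows "0 \<le> radial_profile r \<and> radial_profile r \<le> 1"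
proof -
  have "1 - radial_profile r = (1 - r) * (1 - r * (1 - r))"
    unfolding radial_profile_def radial_factor_def by algebra
  moreover have "r * (1 - r) \<le> 1" using assms by (intro mult_le_one) auto
  then have "0 \<le> (1 - r) * (1 - r * (1 - r))" using assms by (intro mult_nonneg_nonneg) auto
  ultimately have "radial_profile r \<le> 1" by linarith
  moreover have "0 \<le> radial_profile r"
    unfolding radial_profile_def using assms radial_factor_pos[of r] by simp
  ultimately show ?thesis by simp
qed

lemma radial_profile_inj:
  assumes "0 \<le> a" "a \<le> 1" "0 \<le> b" "b \<le> 1" and eq: "radial_profile a = radial_profile b"
  shows "a = b"
proof -
  have diff: "radial_profile a - radial_profile b = (a - b) * (2 - 2 * (a + b) + a\<^sup>2 + a * b + b\<^sup>2)"
    unfolding radial_profile_def radial_factor_def by algebra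
  \<comment> \<open>completing the square shows that the second factor is positive everywhere\<close>
  have "4 * (2 - 2 * (a + b) + a\<^sup>2 + a * b + b\<^sup>2) = (a - b)\<^sup>2 + 3 * ((a + b) - 4/3)\<^sup>2 + 8/3"
    by (simp add: power2_eq_square field_simps)
  moreover have "0 < (a - b)\<^sup>2 + 3 * ((a + b) - 4/3)\<^sup>2 + 8/3"
    by (intro add_nonneg_pos add_nonneg_nonneg) auto
  ultimately have "2 - 2 * (a + b) + a\<^sup>2 + a * b + b\<^sup>2 > 0" by simp
  with diff eq show "a = b" by simp
qed

lemma radial_profile_surj:
  assumes "0 \<le> s" "s \<le> 1"
  obtains r where "0 \<le> r" "r \<le> 1" "radial_profile r = s"
  using IVT'[of radial_profile 0 s 1] assms continuous_on_radial_profile by auto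

lemma norm_spiral_map: "i \<noteq> j \<Longrightarrow> norm (spiral_map i j v) = radial_profile (norm v)"
  by (simp add: spiral_map_def norm_plane_rotation norm_radial_push)

lemma spiral_map_sphere: "norm v = 1 \<Longrightarrow> spiral_map i j v = v"
  by (simp add: spiral_map_def radial_push_def)

lemma continuous_on_spiral_map: "continuous_on S (spiral_map i j)"
  unfolding spiral_map_def radial_push_def radial_factor_def by (intro continuous_intros)

lemma spiral_map_polar_point:
  assumes "0 \<le> r" "i \<noteq> j"
  shows "spiral_map i j (polar_point i j r s)
           = polar_point i j (radial_profile r) (s + (1 - radial_profile r))"
proof -
  have "norm (polar_point i j r s) = r" using assms by (simp add: norm_polar_point)
  then have "radial_push (polar_point i j r s) = polar_point i j (radial_profile r) s"
    by (auto simp: radial_push_def radial_profile_def polar_point_def vec_eq_iff)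
  moreover have "0 \<le> radial_profile r"
    using assms radial_factor_pos[of r] by (simp add: radial_profile_def)
  ultimately show ?thesis
    using assms by (simp add: spiral_map_def norm_polar_point plane_rotation_polar_point)
qed

lemma spiral_map_inj_on:
  fixes i j :: "'n::finite"
  assumes "i \<noteq> j"
  shows "inj_on (spiral_map i j) (cball 0 1)"
proof
  fix v w :: "real^'n" assume v: "v \<in> cball 0 1" and w: "w \<in> cball 0 1"
    and eq: "spiral_map i j v = spiral_map i j w"
  have "radial_profile (norm v) = radial_profile (norm w)"
    using arg_cong[OF eq, of norm] by (simp add: norm_spiral_map[OF assms])
  then have norms: "norm v = norm w"
    using radial_profile_inj[of "norm v" "norm w"] v w by simp
  have undo: "radial_push u = plane_rotation i j (- (1 - norm (radial_push u))) (spiral_map i j u)"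
    for u :: "real^'n"
    by (simp add: spiral_map_def plane_rotation_add[OF assms])
  have "radial_push v = radial_push w"
    using undo[of v] undo[of w] eq norms by (simp add: norm_radial_push)
  then show "v = w"
    using norms radial_factor_pos[of "norm v"] by (simp add: radial_push_def)
qed

lemma spiral_map_image:
  fixes i j :: "'n::finite"
  assumes "i \<noteq> j"
  shows "spiral_map i j ` cball 0 1 = cball 0 1"
proof
  show "spiral_map i j ` cball 0 1 \<subseteq> cball 0 1"
    using radial_profile_bounds by (auto simp: norm_spiral_map[OF assms])
next
  show "cball 0 1 \<subseteq> spiral_map i j ` cball 0 1"
  proof
    fix w :: "real^'n" assume w: "w \<in> cball 0 1"
    define w' where "w' = plane_rotation i j (- (1 - norm w)) w"
    have norm_w': "norm w' = norm w" by (simp add: w'_def norm_plane_rotation[OF assms])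
    obtain r where r: "0 \<le> r" "r \<le> 1" "radial_profile r = norm w"
      using radial_profile_surj[of "norm w"] w by auto
    obtain v where v: "v \<in> cball 0 1" "radial_push v = w'"
    proof (cases "w = 0")
      case True
      then show ?thesis using that[of 0] by (simp add: w'_def radial_push_def plane_rotation_def vec_eq_iff)
    next
      case False
      define v where "v = (r / norm w) *\<^sub>R w'"
      have norm_v: "norm v = r" using False r norm_w' by (simp add: v_def)
      have "radial_push v = (radial_factor r * (r / norm w)) *\<^sub>R w'"
        unfolding radial_push_def norm_v by (simp add: v_def)
      also have "radial_factor r * (r / norm w) = 1"
        using r False by (simp add: radial_profile_def mult.commute)
      finally have "radial_push v = w'" by simp
      then show ?thesis using that[of v] norm_v r by simp
    qed
    have "spiral_map i j v = plane_rotation i j (1 - norm w) w'"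
      using v norm_w' by (simp add: spiral_map_def)
    also have "\<dots> = w" by (simp add: w'_def plane_rotation_add[OF assms])
    finally show "w \<in> spiral_map i j ` cball 0 1" using v(1) by (rule image_eqI[OF sym])
  qed
qed

lemma spiral_map_homeomorphism:
  fixes i j :: "'n::finite"
  assumes "i \<noteq> j"
  obtains g where "homeomorphism (cball 0 1) (cball 0 1) (spiral_map i j) g"
  using homeomorphism_compact[OF compact_cball continuous_on_spiral_map
      spiral_map_image[OF assms] spiral_map_inj_on[OF assms]] by blast

lemma approx_mod_of_incseq_small_steps:
  fixes S :: "nat \<Rightarrow> real"
  assumes "incseq S" and steps: "(\<lambda>n. S (Suc n) - S n) \<longlonglongrightarrow> 0"
    and unbounded: "\<And>T. \<exists>n. T \<le> S n" and "0 < c" "0 < e"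
  shows "\<exists>n\<ge>M. \<exists>N::int. \<bar>S n - (t + c * of_int N)\<bar> < e"
proof -
  obtain K0 where "\<And>p. K0 \<le> p \<Longrightarrow> S (Suc p) - S p < e"
    using order_tendstoD(2)[OF steps \<open>0 < e\<close>] by (auto simp: eventually_sequentially)
  then obtain K where "M \<le> K" and small: "\<And>p. K \<le> p \<Longrightarrow> S (Suc p) - S p < e"
    by (metis max.cobounded1 max.cobounded2 order_trans)
  define N :: int where "N = \<lceil>(S K - t) / c\<rceil> + 1"
  define tau where "tau = t + c * of_int N"
  have "(S K - t) / c < of_int N" unfolding N_def by linarith
  then have K_below: "S K < tau" using \<open>0 < c\<close> by (simp add: tau_def pos_divide_less_eq mult.commute)
  \<comment> \<open>the first time the sequence passes tau, it overshoots by less than one step\<close>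
  define n where "n = (LEAST n. tau \<le> S n)"
  have n_above: "tau \<le> S n" unfolding n_def using unbounded by (rule LeastI_ex)
  have "K < n"
    using n_above K_below monoD[OF \<open>incseq S\<close>, of n K] by (cases "K < n") auto
  then obtain p where p: "n = Suc p" "K \<le> p" by (cases n) auto
  have "\<not> tau \<le> S p" using p(1) unfolding n_def by (intro not_less_Least) simp
  with small[OF p(2)] p(1) n_above have "\<bar>S n - tau\<bar> < e" by auto
  with \<open>M \<le> K\<close> \<open>K < n\<close> show ?thesis unfolding tau_def by (intro exI[of _ n]) auto
qed

lemma limit_mod_of_incseq_small_steps:
  fixes S :: "nat \<Rightarrow> real"
  assumes "incseq S" and "(\<lambda>n. S (Suc n) - S n) \<longlonglongrightarrow> 0"
    and "\<And>T. \<exists>n. T \<le> S n" and "0 < c"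
  obtains sel :: "nat \<Rightarrow> nat" and N :: "nat \<Rightarrow> int"
  where "filterlim sel at_top sequentially" "(\<lambda>k. S (sel k) - c * of_int (N k)) \<longlonglongrightarrow> t"
proof -
  have "\<forall>k. \<exists>n N. k \<le> n \<and> \<bar>S n - (t + c * of_int (N::int))\<bar> < inverse (real (Suc k))"
    using approx_mod_of_incseq_small_steps[OF assms] by simp
  then obtain sel N where sel: "\<And>k. k \<le> sel k"
    and close: "\<And>k. \<bar>S (sel k) - (t + c * of_int (N k))\<bar> < inverse (real (Suc k))"
    by metis
  have "filterlim sel at_top sequentially"
    by (rule filterlim_at_top_mono[OF filterlim_ident]) (use sel in auto)
  moreover have "(\<lambda>k. S (sel k) - c * of_int (N k) - t) \<longlonglongrightarrow> 0"
    by (rule Lim_null_comparison[OF _ LIMSEQ_inverse_real_of_nat])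
      (use close in \<open>auto intro!: always_eventually simp: algebra_simps less_imp_le\<close>)
  then have "(\<lambda>k. S (sel k) - c * of_int (N k)) \<longlonglongrightarrow> t"
    by (simp add: LIM_zero_iff)
  ultimately show ?thesis using that by blast
qed

lemma gap_step_lower:
  fixes x u :: real
  assumes "2 \<le> x" "1 / x \<le> u" "u \<le> 1/2"
  shows "1 / (x + 1) \<le> u - (1 - u) * u\<^sup>2"
proof -
  define a where "a = 1 / x"
  have a: "0 < a" "a \<le> 1/2" "a \<le> u" using assms by (auto simp: a_def field_simps)
  have "u - (1 - u) * u\<^sup>2 - (a - (1 - a) * a\<^sup>2) = (u - a) * ((1 - u - a) + (u\<^sup>2 + u * a + a\<^sup>2))"
    by algebra
  moreover have "0 \<le> (u - a) * ((1 - u - a) + (u\<^sup>2 + u * a + a\<^sup>2))"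
    using a assms(3) by (intro mult_nonneg_nonneg add_nonneg_nonneg) auto
  moreover have "a - (1 - a) * a\<^sup>2 = (x\<^sup>2 - x + 1) / x ^ 3"
    using assms(1) by (simp add: a_def power2_eq_square power3_eq_cube field_simps)
  moreover have "1 / (x + 1) \<le> (x\<^sup>2 - x + 1) / x ^ 3"
  proof -
    have "x ^ 3 \<le> (x\<^sup>2 - x + 1) * (x + 1)"
      by (simp add: power2_eq_square power3_eq_cube algebra_simps)
    then show ?thesis using assms(1) by (simp add: divide_simps)
  qed
  ultimately show ?thesis by linarith
qed

lemma gap_step_upper:
  fixes x u :: real
  assumes "4 \<le> x" "0 \<le> u" "u \<le> 2 / x"
  shows "u - (1 - u) * u\<^sup>2 \<le> 2 / (x + 1)"
proof -
  define c where "c = 2 / x"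
  have c: "c \<le> 1/2" using assms(1) by (simp add: c_def field_simps)
  have "u \<le> 1/2" using assms(3) c by (simp add: c_def)
  then have "u\<^sup>2 * (1/2) \<le> u\<^sup>2 * (1 - u)" by (intro mult_left_mono) auto
  then have "u - (1 - u) * u\<^sup>2 \<le> u - u\<^sup>2 / 2" by (simp add: mult.commute)
  also have "\<dots> \<le> c - c\<^sup>2 / 2"
  proof -
    have "c - c\<^sup>2 / 2 - (u - u\<^sup>2 / 2) = (c - u) * (2 - c - u) / 2"
      by (simp add: power2_eq_square field_simps)
    moreover have "0 \<le> (c - u) * (2 - c - u)"
      using assms(3) c by (intro mult_nonneg_nonneg) (auto simp flip: c_def)
    ultimately show ?thesis by simp
  qed
  also have "\<dots> = 2 * (x - 1) / x\<^sup>2"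
    using assms(1) by (simp add: c_def power2_eq_square field_simps)
  also have "\<dots> \<le> 2 / (x + 1)"
  proof -
    have "(2 * x - 2) * (x + 1) \<le> 2 * x\<^sup>2" by (simp add: power2_eq_square algebra_simps)
    then show ?thesis using assms(1) by (simp add: divide_simps)
  qed
  finally show ?thesis .
qed

primrec orbit_radius :: "nat \<Rightarrow> real" where
  "orbit_radius 0 = 1/2"
| "orbit_radius (Suc n) = radial_profile (orbit_radius n)"

primrec orbit_angle :: "nat \<Rightarrow> real" where
  "orbit_angle 0 = 0"
| "orbit_angle (Suc n) = orbit_angle n + (1 - orbit_radius (Suc n))"

lemma orbit_radius_gap_bounds:
  "1 / (real n + 2) \<le> 1 - orbit_radius n \<and> 1 - orbit_radius n \<le> 2 / (real n + 4)"
proof (induction n)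
  case 0
  then show ?case by simp
next
  case (Suc n)
  define u where "u = 1 - orbit_radius n"
  have lower: "1 / (real n + 2) \<le> u" and upper: "u \<le> 2 / (real n + 4)"
    using Suc.IH by (auto simp: u_def)
  have "2 / (real n + 4) \<le> 1/2" by (simp add: field_simps)
  then have "u \<le> 1/2" using upper by linarith
  have "0 \<le> u" using lower by (smt (verit) divide_nonneg_nonneg of_nat_0_le_iff)
  have "1 - orbit_radius (Suc n) = u - (1 - u) * u\<^sup>2"
    unfolding u_def orbit_radius.simps radial_profile_def radial_factor_def by algebra
  moreover have "1 / (real n + 2 + 1) \<le> u - (1 - u) * u\<^sup>2"
    using lower \<open>u \<le> 1/2\<close> by (intro gap_step_lower) auto
  moreover have "u - (1 - u) * u\<^sup>2 \<le> 2 / (real n + 4 + 1)"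
    using upper \<open>0 \<le> u\<close> by (intro gap_step_upper) auto
  ultimately show ?case by (simp add: add_ac)
qed

lemma orbit_radius_bounds: "1/2 \<le> orbit_radius n \<and> orbit_radius n < 1"
proof -
  have "0 < 1 / (real n + 2)" "2 / (real n + 4) \<le> 1/2" by (simp_all add: field_simps)
  then show ?thesis using orbit_radius_gap_bounds[of n] by linarith
qed

lemma orbit_radius_tendsto: "orbit_radius \<longlonglongrightarrow> 1"
proof -
  have "(\<lambda>n. 1 - orbit_radius n) \<longlonglongrightarrow> 0"
  proof (rule Lim_null_comparison)
    show "\<forall>\<^sub>F n in sequentially. norm (1 - orbit_radius n) \<le> 2 * inverse (real (Suc n))"
    proof (intro always_eventually allI)
      fix n
      have "norm (1 - orbit_radius n) \<le> 2 / (real n + 4)"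
        using orbit_radius_bounds[of n] orbit_radius_gap_bounds[of n] by simp
      also have "\<dots> \<le> 2 * inverse (real (Suc n))" by (simp add: field_simps)
      finally show "norm (1 - orbit_radius n) \<le> 2 * inverse (real (Suc n))" .
    qed
    show "(\<lambda>n. 2 * inverse (real (Suc n))) \<longlonglongrightarrow> 0"
      using tendsto_mult_right_zero[OF LIMSEQ_inverse_real_of_nat] by simp
  qed
  then have "(\<lambda>n. 1 - (1 - orbit_radius n)) \<longlonglongrightarrow> 1 - 0" by (intro tendsto_intros)
  then show ?thesis by simp
qed

lemma incseq_orbit_angle: "incseq orbit_angle"
proof (rule incseq_SucI)
  fix n show "orbit_angle n \<le> orbit_angle (Suc n)"
    using orbit_radius_bounds[of "Suc n"] by (simp only: orbit_angle.simps) linarith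
qed

lemma orbit_angle_steps_tendsto: "(\<lambda>n. orbit_angle (Suc n) - orbit_angle n) \<longlonglongrightarrow> 0"
proof -
  have "(\<lambda>n. 1 - orbit_radius (Suc n)) \<longlonglongrightarrow> 1 - 1"
    by (intro tendsto_intros LIMSEQ_Suc[OF orbit_radius_tendsto])
  then show ?thesis by simp
qed

lemma orbit_angle_ge_ln: "ln (real n + 3) - ln 3 \<le> orbit_angle n"
proof (induction n)
  case 0
  then show ?case by simp
next
  case (Suc n)
  have "(real n + 4) / (real n + 3) = 1 + 1 / (real n + 3)" by (simp add: field_simps)
  then have "ln (real n + 4) - ln (real n + 3) = ln (1 + 1 / (real n + 3))"
    using ln_div[of "real n + 4" "real n + 3"] by simp
  also have "\<dots> \<le> 1 / (real n + 3)" by (rule ln_add_one_self_le_self) simp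
  also have "\<dots> \<le> 1 - orbit_radius (Suc n)"
    using orbit_radius_gap_bounds[of "Suc n"] by (simp add: add.commute)
  finally show ?case using Suc.IH by (simp add: add_ac)
qed

lemma orbit_angle_unbounded: "\<exists>n. T \<le> orbit_angle n"
proof -
  define n where "n = nat \<lceil>exp (T + ln 3)\<rceil>"
  have "exp (T + ln 3) \<le> real n + 3" unfolding n_def by linarith
  then have "T + ln 3 \<le> ln (real n + 3)" by (simp add: ln_ge_iff)
  then show ?thesis using orbit_angle_ge_ln[of n] by (intro exI[of _ n]) linarith
qed

lemma spiral_map_iterate:
  assumes "i \<noteq> j"
  shows "(spiral_map i j ^^ n) (polar_point i j (1/2) 0)
           = polar_point i j (orbit_radius n) (orbit_angle n)"
proof (induction n)
  case 0
  then show ?case by simp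
next
  case (Suc n)
  then show ?case
    using orbit_radius_bounds[of n] assms by (simp add: spiral_map_polar_point)
qed

lemma polar_circle_subset_omega_limit:
  assumes "i \<noteq> j"
  shows "range (polar_point i j 1) \<subseteq> omega_limit (spiral_map i j) (polar_point i j (1/2) 0)"
proof clarify
  fix t
  obtain sel N where sel: "filterlim sel at_top sequentially"
    and angle: "(\<lambda>k. orbit_angle (sel k) - 2 * pi * of_int (N k)) \<longlonglongrightarrow> t"
    using limit_mod_of_incseq_small_steps[OF incseq_orbit_angle orbit_angle_steps_tendsto
        orbit_angle_unbounded, of "2 * pi"] by auto
  have "(\<lambda>k. polar_point i j (orbit_radius (sel k)) (orbit_angle (sel k) - 2 * pi * of_int (N k)))
          \<longlonglongrightarrow> polar_point i j 1 t"
    by (intro tendsto_intros filterlim_compose[OF orbit_radius_tendsto sel] angle)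
  then show "polar_point i j 1 t \<in> omega_limit (spiral_map i j) (polar_point i j (1/2) 0)"
    using sel unfolding omega_limit_def spiral_map_iterate[OF assms] polar_point_periodic by blast
qed

lemma omega_limit_spiral_orbit_subset_sphere:
  assumes "i \<noteq> j"
  shows "omega_limit (spiral_map i j) (polar_point i j (1/2) 0) \<subseteq> sphere 0 1"
proof
  fix y assume "y \<in> omega_limit (spiral_map i j) (polar_point i j (1/2) 0)"
  then obtain sel where sel: "filterlim sel at_top sequentially"
    and lim: "(\<lambda>k. polar_point i j (orbit_radius (sel k)) (orbit_angle (sel k))) \<longlonglongrightarrow> y"
    unfolding omega_limit_def spiral_map_iterate[OF assms] by blast
  have "(\<lambda>k. norm (polar_point i j (orbit_radius (sel k)) (orbit_angle (sel k)))) \<longlonglongrightarrow> norm y"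
    using lim by (rule tendsto_norm)
  moreover have "norm (polar_point i j (orbit_radius (sel k)) (orbit_angle (sel k)))
                   = orbit_radius (sel k)" for k
    using assms orbit_radius_bounds[of "sel k"] by (simp add: norm_polar_point)
  ultimately have "(\<lambda>k. orbit_radius (sel k)) \<longlonglongrightarrow> norm y" by simp
  then have "norm y = 1"
    using filterlim_compose[OF orbit_radius_tendsto sel] LIMSEQ_unique by blast
  then show "y \<in> sphere 0 1" by simp
qed

lemma ball_homeomorphism_with_infinite_omega_limit_in_sphere:
  assumes "CARD('n::finite) \<ge> 2"
  obtains \<phi> \<psi> :: "real^'n \<Rightarrow> real^'n" and v0
  where "homeomorphism (cball 0 1) (cball 0 1) \<phi> \<psi>" "\<And>v. norm v = 1 \<Longrightarrow> \<phi> v = v"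
    "v0 \<in> cball 0 1" "omega_limit \<phi> v0 \<subseteq> sphere 0 1" "infinite (omega_limit \<phi> v0)"
proof -
  obtain i j :: 'n where "i \<noteq> j"
  proof -
    fix i :: 'n
    have "\<not> UNIV \<subseteq> {i}" using assms card_mono[of "{i}" UNIV] by auto
    then show thesis using that by blast
  qed
  obtain \<psi> where "homeomorphism (cball 0 1) (cball 0 1) (spiral_map i j) \<psi>"
    using spiral_map_homeomorphism[OF \<open>i \<noteq> j\<close>] .
  moreover have "polar_point i j (1/2) 0 \<in> cball 0 1" using \<open>i \<noteq> j\<close> by (simp add: norm_polar_point)
  moreover have "infinite (omega_limit (spiral_map i j) (polar_point i j (1/2) 0))"
    using infinite_polar_circle[OF \<open>i \<noteq> j\<close>] polar_circle_subset_omega_limit[OF \<open>i \<noteq> j\<close>]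
    by (rule infinite_super[rotated])
  ultimately show thesis
    using that spiral_map_sphere omega_limit_spiral_orbit_subset_sphere[OF \<open>i \<noteq> j\<close>] by blast
qed

lemma funpow_conjugate:
  assumes "\<And>v. v \<in> K \<Longrightarrow> F (e v) = e (\<phi> v)" "\<phi> ` K \<subseteq> K" "v \<in> K"
  shows "(F ^^ n) (e v) = e ((\<phi> ^^ n) v) \<and> (\<phi> ^^ n) v \<in> K"
  by (induction n) (use assms in auto)

lemma omega_limit_conjugate:
  fixes e :: "'a::metric_space \<Rightarrow> 'b::metric_space"
  assumes "homeomorphism K B e e'" "compact K"
    and "\<phi> ` K \<subseteq> K" "\<And>v. v \<in> K \<Longrightarrow> F (e v) = e (\<phi> v)" "v \<in> K"
  shows "omega_limit F (e v) = e ` omega_limit \<phi> v"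
proof -
  have iter: "(F ^^ n) (e v) = e ((\<phi> ^^ n) v)" and orbit: "(\<phi> ^^ n) v \<in> K" for n
    using funpow_conjugate[of K F e \<phi> v n] assms(3-5) by auto
  have cont: "continuous_on K e" "continuous_on B e'"
    and inv: "\<And>v. v \<in> K \<Longrightarrow> e' (e v) = v" "\<And>y. y \<in> B \<Longrightarrow> e (e' y) = y"
    and img: "e ` K = B"
    using assms(1) by (auto simp: homeomorphism_def)
  have "closed B" using compact_continuous_image[OF cont(1) assms(2)] img
    by (simp add: compact_imp_closed)
  show ?thesis
  proof
    show "omega_limit F (e v) \<subseteq> e ` omega_limit \<phi> v"
    proof
      fix y assume "y \<in> omega_limit F (e v)"
      then obtain r where r: "filterlim r at_top sequentially"
        and lim: "(\<lambda>i. e ((\<phi> ^^ r i) v)) \<longlonglongrightarrow> y"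
        unfolding omega_limit_def iter by blast
      have "y \<in> B"
        using closed_sequentially[OF \<open>closed B\<close> _ lim] orbit img by blast
      moreover have "\<forall>\<^sub>F i in sequentially. e ((\<phi> ^^ r i) v) \<in> B"
        using orbit img by (auto intro!: always_eventually)
      ultimately have "(\<lambda>i. e' (e ((\<phi> ^^ r i) v))) \<longlonglongrightarrow> e' y"
        by (rule continuous_on_tendsto_compose[OF cont(2) lim])
      then have "e' y \<in> omega_limit \<phi> v"
        using r orbit inv(1) unfolding omega_limit_def by auto
      with \<open>y \<in> B\<close> inv(2) show "y \<in> e ` omega_limit \<phi> v" by (metis image_eqI)
    qed
  next
    show "e ` omega_limit \<phi> v \<subseteq> omega_limit F (e v)"
    proof clarify
      fix w assume "w \<in> omega_limit \<phi> v"
      then obtain r where r: "filterlim r at_top sequentially"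
        and lim: "(\<lambda>i. (\<phi> ^^ r i) v) \<longlonglongrightarrow> w"
        unfolding omega_limit_def by blast
      have "w \<in> K"
        using closed_sequentially[OF compact_imp_closed[OF assms(2)] _ lim] orbit by blast
      then have "(\<lambda>i. e ((\<phi> ^^ r i) v)) \<longlonglongrightarrow> e w"
        using orbit by (intro continuous_on_tendsto_compose[OF cont(1) lim] always_eventually) auto
      then show "e w \<in> omega_limit F (e v)"
        using r unfolding omega_limit_def iter by blast
    qed
  qed
qed

lemma continuous_on_extend_by_identity:
  fixes e :: "'b::topological_space \<Rightarrow> 'a::t2_space"
  assumes hom: "homeomorphism K B e e'" and "compact K" "B \<subseteq> X" "U \<subseteq> K"
    and open_image: "openin (top_of_set X) (e ` U)"
    and cont_g: "continuous_on K g" and maps_K: "g ` K \<subseteq> K" and id_outside: "\<And>v. v \<in> K - U \<Longrightarrow> g v = v"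
  shows "continuous_on X (\<lambda>x. if x \<in> B then e (g (e' x)) else x)"
proof -
  have cont: "continuous_on K e" "continuous_on B e'"
    and inv: "\<And>y. y \<in> B \<Longrightarrow> e (e' y) = y" and img: "e ` K = B" "e' ` B = K"
    using hom by (auto simp: homeomorphism_def)
  have "closed B" using compact_continuous_image[OF cont(1) \<open>compact K\<close>] img(1)
    by (simp add: compact_imp_closed)
  have X_split: "X = B \<union> (X - e ` U)" using \<open>B \<subseteq> X\<close> \<open>U \<subseteq> K\<close> img(1) by auto
  have "continuous_on (B \<union> (X - e ` U)) (\<lambda>x. if x \<in> B then e (g (e' x)) else x)"
  proof (rule continuous_on_cases_local)
    show "closedin (top_of_set (B \<union> (X - e ` U))) B"
      using \<open>closed B\<close> by (intro closed_subset) auto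
    show "closedin (top_of_set (B \<union> (X - e ` U))) (X - e ` U)"
      unfolding X_split[symmetric] using open_image by (intro closedin_diff) auto
    show "continuous_on B (\<lambda>x. e (g (e' x)))"
      using img maps_K
      by (intro continuous_on_compose2[OF cont(1)] continuous_on_compose2[OF cont_g cont(2)]) auto
    show "continuous_on (X - e ` U) (\<lambda>x. x)" by (rule continuous_on_id)
    show "e (g (e' x)) = x" if "x \<in> B \<and> x \<notin> B \<or> x \<in> X - e ` U \<and> x \<in> B" for x
    proof -
      have "e' x \<in> K - U" using that img inv by (metis Diff_iff image_eqI)
      then show ?thesis using id_outside that inv by auto
    qed
  qed
  then show ?thesis using X_split by simp
qed

lemma homeomorphism_extend_by_identity:
  fixes e :: "'b::topological_space \<Rightarrow> 'a::t2_space"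
  assumes hom: "homeomorphism K B e e'" and "compact K" "B \<subseteq> X" "U \<subseteq> K"
    and "openin (top_of_set X) (e ` U)"
    and hom_K: "homeomorphism K K \<phi> \<psi>" and id_outside: "\<And>v. v \<in> K - U \<Longrightarrow> \<phi> v = v"
  shows "homeomorphism X X (\<lambda>x. if x \<in> B then e (\<phi> (e' x)) else x)
                            (\<lambda>x. if x \<in> B then e (\<psi> (e' x)) else x)"
proof -
  have inv: "\<And>v. v \<in> K \<Longrightarrow> e' (e v) = v" "\<And>y. y \<in> B \<Longrightarrow> e (e' y) = y"
    and img: "e ` K = B" "e' ` B = K"
    using hom by (auto simp: homeomorphism_def)
  have inv_K: "\<And>v. v \<in> K \<Longrightarrow> \<psi> (\<phi> v) = v" "\<And>v. v \<in> K \<Longrightarrow> \<phi> (\<psi> v) = v"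
    and img_K: "\<phi> ` K = K" "\<psi> ` K = K" and cont_K: "continuous_on K \<phi>" "continuous_on K \<psi>"
    using hom_K by (auto simp: homeomorphism_def)
  have id_outside': "\<psi> v = v" if "v \<in> K - U" for v using id_outside[OF that] inv_K(1) that by force
  show ?thesis
  proof (rule homeomorphismI)
    show "continuous_on X (\<lambda>x. if x \<in> B then e (\<phi> (e' x)) else x)"
      using assms(1-5) cont_K(1) img_K(1) id_outside by (intro continuous_on_extend_by_identity) auto
    show "continuous_on X (\<lambda>x. if x \<in> B then e (\<psi> (e' x)) else x)"
      using assms(1-5) cont_K(2) img_K(2) id_outside' by (intro continuous_on_extend_by_identity) auto
  next
    have maps_K: "\<phi> v \<in> K" "\<psi> v \<in> K" if "v \<in> K" for v
      using that img_K by blast+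
    have "e (\<phi> (e' x)) \<in> B" "e (\<psi> (e' x)) \<in> B" if "x \<in> B" for x
      using that img maps_K by blast+
    then show "(\<lambda>x. if x \<in> B then e (\<phi> (e' x)) else x) ` X \<subseteq> X"
      and "(\<lambda>x. if x \<in> B then e (\<psi> (e' x)) else x) ` X \<subseteq> X"
      and "\<And>x. x \<in> X \<Longrightarrow> (\<lambda>x. if x \<in> B then e (\<psi> (e' x)) else x)
                            ((\<lambda>x. if x \<in> B then e (\<phi> (e' x)) else x) x) = x"
      and "\<And>x. x \<in> X \<Longrightarrow> (\<lambda>x. if x \<in> B then e (\<phi> (e' x)) else x)
                            ((\<lambda>x. if x \<in> B then e (\<psi> (e' x)) else x) x) = x"
      using \<open>B \<subseteq> X\<close> img inv inv_K maps_K by (auto simp: image_iff)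
  qed
qed

lemma free_ball_homeomorphism_with_infinite_fixed_omega_limit:
  fixes e :: "'b::euclidean_space \<Rightarrow> 'a::metric_space" and \<phi> \<psi> :: "'b \<Rightarrow> 'b"
  assumes hom: "homeomorphism (cball 0 1) B e e'" and "B \<subseteq> X"
    and open_ball: "openin (top_of_set X) (e ` ball 0 1)"
    and hom_ball: "homeomorphism (cball 0 1) (cball 0 1) \<phi> \<psi>"
    and sphere_fixed: "\<And>v. norm v = 1 \<Longrightarrow> \<phi> v = v"
    and "v0 \<in> cball 0 1" and omega_sphere: "omega_limit \<phi> v0 \<subseteq> sphere 0 1"
    and "infinite (omega_limit \<phi> v0)"
  shows "\<exists>f g x. homeomorphism X X f g \<and> x \<in> X \<and> infinite (omega_limit f x) \<and>
                 (\<forall>y\<in>omega_limit f x. f y = y)"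
proof -
  define F where "F x = (if x \<in> B then e (\<phi> (e' x)) else x)" for x
  define G where "G x = (if x \<in> B then e (\<psi> (e' x)) else x)" for x
  have "homeomorphism X X F G"
    unfolding F_def[abs_def] G_def[abs_def] using sphere_fixed
    by (intro homeomorphism_extend_by_identity[OF hom compact_cball \<open>B \<subseteq> X\<close> ball_subset_cball
          open_ball hom_ball]) auto
  moreover have F_conj: "F (e v) = e (\<phi> v)" if "v \<in> cball 0 1" for v
    using homeomorphism_apply1[OF hom that] homeomorphism_image1[OF hom] that by (auto simp: F_def)
  have omega: "omega_limit F (e v0) = e ` omega_limit \<phi> v0"
    using homeomorphism_image1[OF hom_ball] F_conj \<open>v0 \<in> cball 0 1\<close>
    by (intro omega_limit_conjugate[OF hom compact_cball]) auto
  have "inj_on e (omega_limit \<phi> v0)"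
    using hom omega_sphere by (intro inj_on_inverseI[of _ e']) (auto simp: homeomorphism_def)
  then have "infinite (omega_limit F (e v0))"
    using \<open>infinite (omega_limit \<phi> v0)\<close> by (simp add: omega finite_image_iff)
  moreover have "F y = y" if "y \<in> omega_limit F (e v0)" for y
    using that omega_sphere F_conj sphere_fixed unfolding omega by fastforce
  moreover have "e v0 \<in> X"
    using homeomorphism_image1[OF hom] \<open>B \<subseteq> X\<close> \<open>v0 \<in> cball 0 1\<close> by blast
  ultimately show ?thesis by blast
qed

lemma not_omega_FTP_if_infinite_fixed_omega_limit:
  assumes "continuous_on X f" "f ` X \<subseteq> X" "x \<in> X"
    and "infinite (omega_limit f x)" "\<And>y. y \<in> omega_limit f x \<Longrightarrow> f y = y"
  shows "\<not> omega_FTP X"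
proof -
  have "totally_periodic f (omega_limit f x)"
    using assms(5) unfolding totally_periodic_def periodic_point_def by (auto intro!: exI[of _ 1])
  then show ?thesis using assms(1-4) unfolding omega_FTP_def by blast
qed

theorem theorem1p5:
  fixes X :: "'a::metric_space set"
  assumes "compact X"
    and "CARD('n::finite) \<ge> 2"
    and "\<exists>B (h :: real^'n \<Rightarrow> 'a). free_ball X B h"
  shows "(\<exists>f g x. homeomorphism X X f g \<and> x \<in> X \<and> infinite (omega_limit f x) \<and>
                 (\<forall>y\<in>omega_limit f x. f y = y)) \<and> \<not> omega_FTP X"
proof -
  obtain B and e :: "real^'n \<Rightarrow> 'a" and e' where "homeomorphism (cball 0 1) B e e'"
    and "B \<subseteq> X" and "openin (top_of_set X) (e ` ball 0 1)"
    using assms(3) unfolding free_ball_def by blast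
  moreover obtain \<phi> \<psi> :: "real^'n \<Rightarrow> real^'n" and v0
    where "homeomorphism (cball 0 1) (cball 0 1) \<phi> \<psi>" "\<And>v. norm v = 1 \<Longrightarrow> \<phi> v = v"
      "v0 \<in> cball 0 1" "omega_limit \<phi> v0 \<subseteq> sphere 0 1" "infinite (omega_limit \<phi> v0)"
    using ball_homeomorphism_with_infinite_omega_limit_in_sphere[OF assms(2)] by blast
  ultimately obtain f g x where "homeomorphism X X f g" "x \<in> X" "infinite (omega_limit f x)"
    "\<forall>y\<in>omega_limit f x. f y = y"
    using free_ball_homeomorphism_with_infinite_fixed_omega_limit by metis
  moreover have "\<not> omega_FTP X"
    using calculation homeomorphism_cont1[of X X f g] homeomorphism_image1[of X X f g]
    by (intro not_omega_FTP_if_infinite_fixed_omega_limit[of X f x]) auto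
  ultimately show ?thesis by blast
qed

end
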